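(* Let $D=\{(x^i,y^i)\}_{i=1}^n$ be any training sequence and $JJ=\{JJ_{x^i}\}$ substructure sets, and let $R$ be the radius of $D$ and $R^{JJ}$ the mixed assignment radius with respect to $JJ$. Consider the first pass of SWVP over $D$ (in the given order), assuming that at every update the weights returned by $\textsc{SetGamma}$ satisfy the $\gamma$ selection conditions (1) and (2). Then the number of mistakes (updates) made in this first pass satisfies $$\#\text{mistakes-SWVP}\le\min_{\mathbf{u}:\|\mathbf{u}\|=1,\ \delta>0}\frac{(R^{JJ}+D_{\mathbf{u},\delta})^2}{(\delta+r^{diff})^2},$$ where $r^{diff}=r^{diff}(\mathbf{u})\ge 0$. Moreover, for every $\mathbf{u},\delta$ this quantity is at most $\frac{(R+D_{\mathbf{u},\delta})^2}{\delta^2}$.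
   Context: Structured prediction setting: for each input $x$ the output space is $\mathcal{Y}(x)=D_Y^{L_x}$ for a finite domain $D_Y$, with feature map $\phi(x,y')\in\mathbb{R}^d$; $\Delta\phi(x,y,z)=\phi(x,y)-\phi(x,z)$; $[n]=\{1,\dots,n\}$. Mixed assignment: for $y^*,y\in\mathcal{Y}(x)$ and $J\subseteq[L_x]$, $m^J(y^*,y)$ has $k$-th coordinate $y^*_k$ if $k\in J$ and $y_k$ otherwise. Substructure sets $JJ_{x^i}\subseteq 2^{[L_{x^i}]}$ are fixed. SWVP algorithm: initialize $\mathbf{w}=0$; cycle through $(x,y)\in D$; compute $y^*=\arg\max_{y'\in\mathcal{Y}(x)}\mathbf{w}\cdot\phi(x,y')$; if $y^*\neq y$ (a mistake), with $m^J=m^J(y^*,y)$ and $I=\{J\in JJ_x: m^J\ne y\}$, obtain weights $\gamma(m^J)$, $J\in I$, from $\textsc{SetGamma}$ and set $\mathbf{w}\leftarrow\mathbf{w}+\sum_{J\in I}\gamma(m^J)\Delta\phi(x,y,m^J)$. $\gamma$ selection conditions (current $\mathbf{w}$): (1) $\gamma(m^J)\ge0$, $\sum_{J\in I}\gamma(m^J)=1$; (2) $\mathbf{w}\cdot\sum_{J\in I}\gamma(m^J)\Delta\phi(x,y,m^J)\le0$. Radius $R$: minimal constant with $\|\Delta\phi(x^i,y^i,z)\|\le R$ for all $i$, $z\in\mathcal{Y}(x^i)$. Mixed assignment radius $R^{JJ}$: minimal constant with $\|\Delta\phi(x^i,y^i,m^J(z,y^i))\|\le R^{JJ}$ for all $i$,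 $z\in\mathcal{Y}(x^i)$, $J\in JJ_{x^i}$. For a unit vector $\mathbf{u}$ and $\delta>0$: $r^i=\mathbf{u}\cdot\phi(x^i,y^i)-\max_{z\in\mathcal{Y}(x^i),z\ne y^i}\mathbf{u}\cdot\phi(x^i,z)$; $\epsilon_i=\max\{0,\delta-r^i\}$; $D_{\mathbf{u},\delta}=\sqrt{\sum_{i=1}^n\epsilon_i^2}$; ${r^i}^{JJ}=\mathbf{u}\cdot\phi(x^i,y^i)-\max_{z\in\mathcal{Y}(x^i),J\in JJ_{x^i},\,m^J(z,y^i)\ne y^i}\mathbf{u}\cdot\phi(x^i,m^J(z,y^i))$; and $r^{diff}=\min_i\{{r^i}^{JJ}-r^i\}$. *)

theory Defs
  imports "HOL-Analysis.Analysis"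
begin

definition outputs :: "('x \<Rightarrow> nat) \<Rightarrow> 'x \<Rightarrow> ('v::finite) list set" where
  "outputs L x = {ys. length ys = L x}"

text \<open>Mixed assignment m^J(ys, y): coordinate k (1-based) is ys_k if k in J, else y_k.\<close>
definition mixed :: "nat set \<Rightarrow> 'v list \<Rightarrow> 'v list \<Rightarrow> 'v list" where
  "mixed J ys y = map (\<lambda>k. if Suc k \<in> J then ys ! k else y ! k) [0..<length y]"

definition dphi :: "('x \<Rightarrow> 'v list \<Rightarrow> real^'d) \<Rightarrow> 'x \<Rightarrow> 'v list \<Rightarrow> 'v list \<Rightarrow> real^'d" where
  "dphi phi x y z = phi x y - phi x z"

text \<open>One step of SWVP on example (x,y): prediction ystar is an argmax of the current
  weights; on a mistake the weights g (returned by SetGamma) satisfy the gamma selection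
  conditions (1),(2) and the update is performed.\<close>
definition swvp_step ::
  "('x \<Rightarrow> 'v::finite list \<Rightarrow> real^'d) \<Rightarrow> ('x \<Rightarrow> nat) \<Rightarrow> ('x \<Rightarrow> nat set set)
   \<Rightarrow> real^'d \<Rightarrow> 'x \<Rightarrow> 'v list \<Rightarrow> 'v list \<Rightarrow> (nat set \<Rightarrow> real) \<Rightarrow> real^'d \<Rightarrow> bool" where
  "swvp_step phi L JJ w x y ystar g w' \<longleftrightarrow>
     ystar \<in> outputs L x \<and> (\<forall>y'\<in>outputs L x. w \<bullet> phi x y' \<le> w \<bullet> phi x ystar) \<and>
     (if ystar = y then w' = w
      else (let I = {J \<in> JJ x. mixed J ystar y \<noteq> y} in
              (\<forall>J\<in>I. 0 \<le> g J) \<and> (\<Sum>J\<in>I. g J) = 1 \<and>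
              w \<bullet> (\<Sum>J\<in>I. g J *\<^sub>R dphi phi x y (mixed J ystar y)) \<le> 0 \<and>
              w' = w + (\<Sum>J\<in>I. g J *\<^sub>R dphi phi x y (mixed J ystar y))))"

text \<open>A run of the first pass of SWVP over D: w i are the weights before example i
  (0-based), ystar i the prediction on example i, g i the SetGamma weights.\<close>
definition swvp_first_pass ::
  "('x \<Rightarrow> 'v::finite list \<Rightarrow> real^'d) \<Rightarrow> ('x \<Rightarrow> nat) \<Rightarrow> ('x \<Rightarrow> nat set set)
   \<Rightarrow> ('x \<times> 'v list) list \<Rightarrow> (nat \<Rightarrow> real^'d) \<Rightarrow> (nat \<Rightarrow> 'v list) \<Rightarrow> (nat \<Rightarrow> nat set \<Rightarrow> real) \<Rightarrow> bool" where
  "swvp_first_pass phi L JJ D w ystar g \<longleftrightarrow>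
     w 0 = 0 \<and>
     (\<forall>i<length D. swvp_step phi L JJ (w i) (fst (D ! i)) (snd (D ! i)) (ystar i) (g i) (w (Suc i)))"

definition num_mistakes :: "('x \<times> 'v list) list \<Rightarrow> (nat \<Rightarrow> 'v list) \<Rightarrow> nat" where
  "num_mistakes D ystar = card {i. i < length D \<and> ystar i \<noteq> snd (D ! i)}"

text \<open>Radius R and mixed-assignment radius R^JJ (minimal constants = maxima).\<close>
definition radius ::
  "('x \<Rightarrow> 'v::finite list \<Rightarrow> real^'d) \<Rightarrow> ('x \<Rightarrow> nat) \<Rightarrow> ('x \<times> 'v list) list \<Rightarrow> real" where
  "radius phi L D = Max {norm (dphi phi (fst (D ! i)) (snd (D ! i)) z) | i z.
       i < length D \<and> z \<in> outputs L (fst (D ! i))}"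

definition radius_JJ ::
  "('x \<Rightarrow> 'v::finite list \<Rightarrow> real^'d) \<Rightarrow> ('x \<Rightarrow> nat) \<Rightarrow> ('x \<Rightarrow> nat set set) \<Rightarrow> ('x \<times> 'v list) list \<Rightarrow> real" where
  "radius_JJ phi L JJ D = Max {norm (dphi phi (fst (D ! i)) (snd (D ! i)) (mixed J z (snd (D ! i)))) | i z J.
       i < length D \<and> z \<in> outputs L (fst (D ! i)) \<and> J \<in> JJ (fst (D ! i))}"

definition margin ::
  "('x \<Rightarrow> 'v::finite list \<Rightarrow> real^'d) \<Rightarrow> ('x \<Rightarrow> nat) \<Rightarrow> real^'d \<Rightarrow> 'x \<Rightarrow> 'v list \<Rightarrow> real" where
  "margin phi L u x y = u \<bullet> phi x y - Max {u \<bullet> phi x z | z. z \<in> outputs L x \<and> z \<noteq> y}"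

definition margin_JJ ::
  "('x \<Rightarrow> 'v::finite list \<Rightarrow> real^'d) \<Rightarrow> ('x \<Rightarrow> nat) \<Rightarrow> ('x \<Rightarrow> nat set set) \<Rightarrow> real^'d \<Rightarrow> 'x \<Rightarrow> 'v list \<Rightarrow> real" where
  "margin_JJ phi L JJ u x y = u \<bullet> phi x y -
     Max {u \<bullet> phi x (mixed J z y) | z J. z \<in> outputs L x \<and> J \<in> JJ x \<and> mixed J z y \<noteq> y}"

definition r_diff ::
  "('x \<Rightarrow> 'v::finite list \<Rightarrow> real^'d) \<Rightarrow> ('x \<Rightarrow> nat) \<Rightarrow> ('x \<Rightarrow> nat set set) \<Rightarrow> ('x \<times> 'v list) list \<Rightarrow> real^'d \<Rightarrow> real" where
  "r_diff phi L JJ D u = Min {margin_JJ phi L JJ u (fst (D ! i)) (snd (D ! i)) - margin phi L u (fst (D ! i)) (snd (D ! i)) | i.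
       i < length D}"

definition D_u_delta ::
  "('x \<Rightarrow> 'v::finite list \<Rightarrow> real^'d) \<Rightarrow> ('x \<Rightarrow> nat) \<Rightarrow> ('x \<times> 'v list) list \<Rightarrow> real^'d \<Rightarrow> real \<Rightarrow> real" where
  "D_u_delta phi L D u \<delta> = sqrt (\<Sum>i<length D. (max 0 (\<delta> - margin phi L u (fst (D ! i)) (snd (D ! i))))\<^sup>2)"

end

theory Submission
  imports Defs
begin

text \<open>SWVP is a perceptron whose update on a mistake is a convex combination of the vectors
  \<open>dphi phi x y (mixed J ystar y)\<close>. Each of them has norm at most \<open>R^JJ\<close> and \<open>u\<close>-margin at least
  \<open>r^JJ_i \<ge> r_i + r_diff\<close>, and condition (2) makes the update non-positively correlated with
  the current weights. Novikoff's argument with slacks \<open>eps_i\<close> then gives, after \<open>k\<close> mistakes,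
  \<open>k (\<delta> + r_diff) - sqrt k D_u_delta \<le> u \<bullet> w \<le> norm w \<le> sqrt k R^JJ\<close>. The comparison with
  \<open>(R + D_u_delta)^2 / \<delta>^2\<close> holds because mixed assignments are outputs and \<open>r_diff \<ge> 0\<close>.\<close>

lemma Collect_less_Suc_conj:
  "{i. i < Suc n \<and> P i} = (if P n then insert n {i. i < n \<and> P i} else {i. i < n \<and> P i})"
  by (auto simp: less_Suc_eq)

lemma norm_convex_combination_le:
  fixes d :: "'b \<Rightarrow> 'a::real_normed_vector"
  assumes "\<And>J. J \<in> I \<Longrightarrow> 0 \<le> g J" and "sum g I = 1"
    and "\<And>J. J \<in> I \<Longrightarrow> norm (d J) \<le> r"
  shows "norm (\<Sum>J\<in>I. g J *\<^sub>R d J) \<le> r"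
proof -
  have "norm (\<Sum>J\<in>I. g J *\<^sub>R d J) \<le> (\<Sum>J\<in>I. norm (g J *\<^sub>R d J))"
    by (rule norm_sum)
  also have "\<dots> = (\<Sum>J\<in>I. g J * norm (d J))"
    using assms(1) by (intro sum.cong) auto
  also have "\<dots> \<le> (\<Sum>J\<in>I. g J * r)"
    by (intro sum_mono mult_left_mono) (use assms in auto)
  also have "\<dots> = r"
    using assms(2) by (simp add: sum_distrib_right[symmetric])
  finally show ?thesis .
qed

lemma inner_convex_combination_ge:
  fixes d :: "'b \<Rightarrow> 'a::real_inner"
  assumes "\<And>J. J \<in> I \<Longrightarrow> 0 \<le> g J" and "sum g I = 1"
    and "\<And>J. J \<in> I \<Longrightarrow> c \<le> u \<bullet> d J"
  shows "c \<le> u \<bullet> (\<Sum>J\<in>I. g J *\<^sub>R d J)"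
proof -
  have "c = (\<Sum>J\<in>I. g J * c)"
    using assms(2) by (simp add: sum_distrib_right[symmetric])
  also have "\<dots> \<le> (\<Sum>J\<in>I. g J * (u \<bullet> d J))"
    by (intro sum_mono mult_left_mono) (use assms in auto)
  also have "\<dots> = u \<bullet> (\<Sum>J\<in>I. g J *\<^sub>R d J)"
    by (simp add: inner_sum_right)
  finally show ?thesis .
qed

lemma sum_le_sqrt_card_mult_sqrt_sum_squares:
  fixes f :: "'a \<Rightarrow> real"
  shows "(\<Sum>i\<in>A. f i) \<le> sqrt (card A) * sqrt (\<Sum>i\<in>A. (f i)\<^sup>2)"
proof -
  have "\<bar>\<Sum>i\<in>A. f i\<bar> = sqrt ((\<Sum>i\<in>A. f i)\<^sup>2)" by simp
  also have "\<dots> \<le> sqrt ((\<Sum>i\<in>A. (f i)\<^sup>2) * card A)"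
    using sum_squared_le_sum_of_squares real_sqrt_le_mono by blast
  finally show ?thesis by (simp add: real_sqrt_mult mult.commute)
qed

lemma perceptron_norm_growth:
  fixes w :: "nat \<Rightarrow> 'a::real_inner" and R :: real
  assumes "w 0 = 0"
    and "\<And>m. m < n \<Longrightarrow> \<not> mistake m \<Longrightarrow> w (Suc m) = w m"
    and "\<And>m. m < n \<Longrightarrow> mistake m \<Longrightarrow> w m \<bullet> (w (Suc m) - w m) \<le> 0"
    and "\<And>m. m < n \<Longrightarrow> mistake m \<Longrightarrow> norm (w (Suc m) - w m) \<le> R"
  shows "(norm (w n))\<^sup>2 \<le> card {i. i < n \<and> mistake i} * R\<^sup>2"
  using assms(2-4)
proof (induction n)
  case 0
  then show ?case using assms(1) by simp
next
  case (Suc n)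
  then have IH: "(norm (w n))\<^sup>2 \<le> card {i. i < n \<and> mistake i} * R\<^sup>2" by simp
  show ?case
  proof (cases "mistake n")
    case True
    define v where "v = w (Suc n) - w n"
    have "w n \<bullet> v \<le> 0" "norm v \<le> R"
      using Suc.prems(2,3)[of n] True by (simp_all add: v_def)
    have "(norm (w (Suc n)))\<^sup>2 = (norm (w n))\<^sup>2 + 2 * (w n \<bullet> v) + (norm v)\<^sup>2"
      by (simp add: v_def power2_norm_eq_inner inner_add inner_diff inner_commute algebra_simps)
    also have "\<dots> \<le> card {i. i < n \<and> mistake i} * R\<^sup>2 + R\<^sup>2"
      using IH \<open>w n \<bullet> v \<le> 0\<close> power_mono[OF \<open>norm v \<le> R\<close> norm_ge_zero, of 2] by simp
    finally show ?thesis
      using True by (simp add: Collect_less_Suc_conj algebra_simps)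
  qed (use IH Suc.prems in \<open>simp add: Collect_less_Suc_conj\<close>)
qed

lemma perceptron_progress:
  fixes w :: "nat \<Rightarrow> 'a::real_inner" and \<gamma> :: real and eps :: "nat \<Rightarrow> real"
  assumes "w 0 = 0"
    and "\<And>m. m < n \<Longrightarrow> \<not> mistake m \<Longrightarrow> w (Suc m) = w m"
    and "\<And>m. m < n \<Longrightarrow> mistake m \<Longrightarrow> \<gamma> - eps m \<le> u \<bullet> (w (Suc m) - w m)"
  shows "card {i. i < n \<and> mistake i} * \<gamma> - (\<Sum>i | i < n \<and> mistake i. eps i) \<le> u \<bullet> w n"
  using assms(2,3)
proof (induction n)
  case 0
  then show ?case using assms(1) by simp
next
  case (Suc n)
  then have IH: "card {i. i < n \<and> mistake i} * \<gamma> - (\<Sum>i | i < n \<and> mistake i. eps i) \<le> u \<bullet> w n"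
    by simp
  show ?case
  proof (cases "mistake n")
    case True
    have "u \<bullet> w (Suc n) = u \<bullet> w n + u \<bullet> (w (Suc n) - w n)"
      by (simp add: inner_diff_right)
    moreover have "\<gamma> - eps n \<le> u \<bullet> (w (Suc n) - w n)"
      using Suc.prems(2)[of n] True by simp
    ultimately show ?thesis
      using IH True by (simp add: Collect_less_Suc_conj algebra_simps)
  qed (use IH Suc.prems in \<open>simp add: Collect_less_Suc_conj\<close>)
qed

lemma perceptron_mistake_bound:
  fixes w :: "nat \<Rightarrow> 'a::real_inner" and R \<gamma> :: real and eps :: "nat \<Rightarrow> real"
  assumes "w 0 = 0"
    and "\<And>m. m < n \<Longrightarrow> \<not> mistake m \<Longrightarrow> w (Suc m) = w m"
    and "\<And>m. m < n \<Longrightarrow> mistake m \<Longrightarrow> w m \<bullet> (w (Suc m) - w m) \<le> 0"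
    and "\<And>m. m < n \<Longrightarrow> mistake m \<Longrightarrow> norm (w (Suc m) - w m) \<le> R"
    and "\<And>m. m < n \<Longrightarrow> mistake m \<Longrightarrow> \<gamma> - eps m \<le> u \<bullet> (w (Suc m) - w m)"
    and "norm u \<le> 1" and "0 < \<gamma>" and "0 \<le> R"
  shows "card {i. i < n \<and> mistake i} \<le> (R + sqrt (\<Sum>i<n. (eps i)\<^sup>2))\<^sup>2 / \<gamma>\<^sup>2"
proof -
  define M where "M = {i. i < n \<and> mistake i}"
  define k where "k = card M"
  define E where "E = sqrt (\<Sum>i<n. (eps i)\<^sup>2)"
  have "k * \<gamma> - (\<Sum>i\<in>M. eps i) \<le> u \<bullet> w n"
    unfolding k_def M_def using perceptron_progress[OF assms(1,2,5)] by blast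
  also have "\<dots> \<le> norm (w n)"
    using norm_cauchy_schwarz[of u "w n"] assms(6) mult_left_le_one_le[of "norm (w n)" "norm u"]
    by (simp add: mult.commute)
  also have "\<dots> \<le> sqrt k * R"
  proof -
    have "(norm (w n))\<^sup>2 \<le> k * R\<^sup>2"
      unfolding k_def M_def using perceptron_norm_growth[OF assms(1-4)] by blast
    then have "sqrt ((norm (w n))\<^sup>2) \<le> sqrt (k * R\<^sup>2)"
      using real_sqrt_le_mono by blast
    then show ?thesis using assms(8) by (simp add: real_sqrt_mult)
  qed
  finally have "k * \<gamma> \<le> sqrt k * R + (\<Sum>i\<in>M. eps i)" by simp
  also have "(\<Sum>i\<in>M. eps i) \<le> sqrt k * E"
  proof -
    have "(\<Sum>i\<in>M. (eps i)\<^sup>2) \<le> (\<Sum>i<n. (eps i)\<^sup>2)"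
      by (rule sum_mono2) (auto simp: M_def)
    then have "sqrt k * sqrt (\<Sum>i\<in>M. (eps i)\<^sup>2) \<le> sqrt k * E"
      unfolding E_def by (intro mult_left_mono) auto
    then show ?thesis
      using sum_le_sqrt_card_mult_sqrt_sum_squares[of eps M] unfolding k_def by linarith
  qed
  finally have kk: "k * \<gamma> \<le> sqrt k * (R + E)" by (simp add: algebra_simps)
  show ?thesis
  proof (cases "k = 0")
    case False
    have "sqrt k * (sqrt k * \<gamma>) \<le> sqrt k * (R + E)"
      using kk by (simp add: mult.assoc[symmetric])
    then have "sqrt k * \<gamma> \<le> R + E"
      using False by (simp add: mult_le_cancel_left_pos)
    then have "(sqrt k * \<gamma>)\<^sup>2 \<le> (R + E)\<^sup>2"
      using assms(7) by (intro power_mono) auto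
    then show ?thesis
      using assms(7) by (simp add: k_def M_def E_def power_mult_distrib pos_le_divide_eq)
  next
    case True
    moreover have "card {i. i < n \<and> mistake i} = k"
      by (simp add: k_def M_def)
    ultimately show ?thesis
      by (metis divide_nonneg_nonneg of_nat_0 zero_le_power2)
  qed
qed

lemma finite_outputs: "finite (outputs L x :: 'v::finite list set)"
  using finite_lists_length_eq[of "UNIV :: 'v set" "L x"] by (simp add: outputs_def)

lemma length_mixed [simp]: "length (mixed J z y) = length y"
  by (simp add: mixed_def)

lemma mixed_in_outputs: "y \<in> outputs L x \<Longrightarrow> mixed J z y \<in> outputs L x"
  by (simp add: outputs_def)

lemma finite_image_set2_filter:
  "finite A \<Longrightarrow> finite B \<Longrightarrow> finite {f a b | a b. a \<in> A \<and> b \<in> B \<and> P a b}"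
  by (rule finite_subset[OF _ finite_imageI[OF finite_cartesian_product, of A B "case_prod f"]])
    auto

lemma margin_le_margin_JJ:
  assumes "y \<in> outputs L x" and "\<exists>z J. z \<in> outputs L x \<and> J \<in> JJ x \<and> mixed J z y \<noteq> y"
  shows "margin phi L u x y \<le> margin_JJ phi L JJ u x y"
proof -
  let ?mixed = "{u \<bullet> phi x (mixed J z y) | z J. z \<in> outputs L x \<and> J \<in> JJ x \<and> mixed J z y \<noteq> y}"
  let ?all = "{u \<bullet> phi x z | z. z \<in> outputs L x \<and> z \<noteq> y}"
  have "?mixed \<subseteq> ?all"
    using mixed_in_outputs[OF assms(1)] by blast
  moreover have "finite ?all"
    by (simp add: finite_outputs)
  ultimately have "Max ?mixed \<le> Max ?all"
    using assms(2) by (intro Max_mono) auto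
  then show ?thesis
    by (simp add: margin_def margin_JJ_def)
qed

lemma margin_JJ_le_inner_dphi:
  assumes "finite (JJ x)" and "z \<in> outputs L x" and "J \<in> JJ x" and "mixed J z y \<noteq> y"
  shows "margin_JJ phi L JJ u x y \<le> u \<bullet> dphi phi x y (mixed J z y)"
proof -
  let ?mixed = "{u \<bullet> phi x (mixed J z y) | z J. z \<in> outputs L x \<and> J \<in> JJ x \<and> mixed J z y \<noteq> y}"
  have "u \<bullet> phi x (mixed J z y) \<le> Max ?mixed"
    using assms by (intro Max_ge finite_image_set2_filter finite_outputs) blast+
  then show ?thesis
    by (simp add: margin_JJ_def dphi_def inner_diff_right)
qed

lemma swvp_step_mistake:
  assumes step: "swvp_step phi L JJ w x y ystar g w'" and "ystar \<noteq> y" and "finite (JJ x)"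
    and bound: "\<forall>z\<in>outputs L x. \<forall>J\<in>JJ x. norm (dphi phi x y (mixed J z y)) \<le> r"
  shows "w \<bullet> (w' - w) \<le> 0" and "norm (w' - w) \<le> r"
    and "margin_JJ phi L JJ u x y \<le> u \<bullet> (w' - w)"
proof -
  define I where "I = {J \<in> JJ x. mixed J ystar y \<noteq> y}"
  have ystar: "ystar \<in> outputs L x"
    using step by (simp add: swvp_step_def)
  have g_nonneg: "\<And>J. J \<in> I \<Longrightarrow> 0 \<le> g J" and g_sum: "sum g I = 1"
    and update: "w' - w = (\<Sum>J\<in>I. g J *\<^sub>R dphi phi x y (mixed J ystar y))"
    and descent: "w \<bullet> (\<Sum>J\<in>I. g J *\<^sub>R dphi phi x y (mixed J ystar y)) \<le> 0"
    using step \<open>ystar \<noteq> y\<close> by (simp_all add: swvp_step_def I_def Let_def)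
  show "w \<bullet> (w' - w) \<le> 0"
    using descent update by simp
  show "norm (w' - w) \<le> r"
    unfolding update using g_nonneg g_sum
    by (rule norm_convex_combination_le) (use bound ystar in \<open>auto simp: I_def\<close>)
  show "margin_JJ phi L JJ u x y \<le> u \<bullet> (w' - w)"
    unfolding update using g_nonneg g_sum
    by (rule inner_convex_combination_ge)
      (use assms(3) ystar in \<open>auto simp: I_def intro: margin_JJ_le_inner_dphi\<close>)
qed

locale swvp_training_set =
  fixes phi :: "'x \<Rightarrow> 'v::finite list \<Rightarrow> real^'d" and L :: "'x \<Rightarrow> nat"
    and JJ :: "'x \<Rightarrow> nat set set" and D :: "('x \<times> 'v list) list"
  assumes nonempty: "D \<noteq> []"
    and label_in_outputs: "i < length D \<Longrightarrow> snd (D ! i) \<in> outputs L (fst (D ! i))"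
    and finite_JJ: "i < length D \<Longrightarrow> finite (JJ (fst (D ! i)))"
    and JJ_nontrivial: "i < length D \<Longrightarrow> \<exists>z J. z \<in> outputs L (fst (D ! i)) \<and> J \<in> JJ (fst (D ! i))
                          \<and> mixed J z (snd (D ! i)) \<noteq> snd (D ! i)"
begin

abbreviation input :: "nat \<Rightarrow> 'x" where "input i \<equiv> fst (D ! i)"
abbreviation label :: "nat \<Rightarrow> 'v list" where "label i \<equiv> snd (D ! i)"

lemma finite_margin_diffs:
  "finite {margin_JJ phi L JJ u (input i) (label i) - margin phi L u (input i) (label i) | i. i < length D}"
  by simp

lemma r_diff_le:
  "i < length D \<Longrightarrow>
     r_diff phi L JJ D u \<le> margin_JJ phi L JJ u (input i) (label i) - margin phi L u (input i) (label i)"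
  unfolding r_diff_def by (rule Min_le[OF finite_margin_diffs]) blast

lemma r_diff_nonneg: "0 \<le> r_diff phi L JJ D u"
proof -
  have "r_diff phi L JJ D u \<in>
      {margin_JJ phi L JJ u (input i) (label i) - margin phi L u (input i) (label i) | i. i < length D}"
    unfolding r_diff_def using nonempty by (intro Min_in[OF finite_margin_diffs]) auto
  moreover have "margin phi L u (input i) (label i) \<le> margin_JJ phi L JJ u (input i) (label i)"
    if "i < length D" for i
    using that by (intro margin_le_margin_JJ label_in_outputs JJ_nontrivial)
  ultimately show ?thesis
    by force
qed

lemma finite_radius_JJ_set:
  "finite {norm (dphi phi (input i) (label i) (mixed J z (label i))) | i z J.
       i < length D \<and> z \<in> outputs L (input i) \<and> J \<in> JJ (input i)}"
proof -
  have "finite (Sigma {..<length D} (\<lambda>i. outputs L (input i) \<times> JJ (input i)))"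
    using finite_JJ by (auto intro: finite_SigmaI finite_outputs)
  from finite_imageI[OF this,
      of "\<lambda>(i, z, J). norm (dphi phi (input i) (label i) (mixed J z (label i)))"]
  show ?thesis
    by (rule finite_subset[rotated])
      (auto intro!: image_eqI[where x = "(i, z, J)" for i z J])
qed

lemma finite_radius_set:
  "finite {norm (dphi phi (input i) (label i) z) | i z. i < length D \<and> z \<in> outputs L (input i)}"
proof -
  have "finite (Sigma {..<length D} (\<lambda>i. outputs L (input i)))"
    by (auto intro: finite_SigmaI finite_outputs)
  from finite_imageI[OF this, of "\<lambda>(i, z). norm (dphi phi (input i) (label i) z)"]
  show ?thesis
    by (rule finite_subset[rotated])
      (auto intro!: image_eqI[where x = "(i, z)" for i z])
qed

lemma norm_dphi_mixed_le_radius_JJ: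
  "i < length D \<Longrightarrow> z \<in> outputs L (input i) \<Longrightarrow> J \<in> JJ (input i) \<Longrightarrow>
     norm (dphi phi (input i) (label i) (mixed J z (label i))) \<le> radius_JJ phi L JJ D"
  unfolding radius_JJ_def by (rule Max_ge[OF finite_radius_JJ_set]) blast

lemma radius_JJ_set_nonempty:
  "{norm (dphi phi (input i) (label i) (mixed J z (label i))) | i z J.
       i < length D \<and> z \<in> outputs L (input i) \<and> J \<in> JJ (input i)} \<noteq> {}"
  using JJ_nontrivial[of 0] nonempty by blast

lemma radius_JJ_nonneg: "0 \<le> radius_JJ phi L JJ D"
  using Max_in[OF finite_radius_JJ_set radius_JJ_set_nonempty] by (auto simp: radius_JJ_def)

lemma radius_JJ_le_radius: "radius_JJ phi L JJ D \<le> radius phi L D"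
  unfolding radius_JJ_def radius_def
  by (rule Max_mono[OF _ radius_JJ_set_nonempty finite_radius_set])
    (blast intro: mixed_in_outputs label_in_outputs)

lemma first_pass_mistake_bound:
  assumes run: "swvp_first_pass phi L JJ D w ystar g" and "norm u = 1" and "0 < \<delta>"
  shows "num_mistakes D ystar
           \<le> (radius_JJ phi L JJ D + D_u_delta phi L D u \<delta>)\<^sup>2 / (\<delta> + r_diff phi L JJ D u)\<^sup>2"
proof -
  define eps where "eps i = max 0 (\<delta> - margin phi L u (input i) (label i))" for i
  have step: "swvp_step phi L JJ (w m) (input m) (label m) (ystar m) (g m) (w (Suc m))"
    if "m < length D" for m
    using run that by (simp add: swvp_first_pass_def)
  have "card {i. i < length D \<and> ystar i \<noteq> label i}
      \<le> (radius_JJ phi L JJ D + sqrt (\<Sum>i<length D. (eps i)\<^sup>2))\<^sup>2 / (\<delta> + r_diff phi L JJ D u)\<^sup>2"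
  proof (rule perceptron_mistake_bound)
    show "w 0 = 0"
      using run by (simp add: swvp_first_pass_def)
    show "w (Suc m) = w m" if "m < length D" "\<not> ystar m \<noteq> label m" for m
      using step that by (simp add: swvp_step_def)
    fix m assume m: "m < length D" and mistake: "ystar m \<noteq> label m"
    have "\<forall>z\<in>outputs L (input m). \<forall>J\<in>JJ (input m).
        norm (dphi phi (input m) (label m) (mixed J z (label m))) \<le> radius_JJ phi L JJ D"
      using norm_dphi_mixed_le_radius_JJ[OF m] by blast
    note update = swvp_step_mistake[OF step[OF m] mistake finite_JJ[OF m] this]
    show "w m \<bullet> (w (Suc m) - w m) \<le> 0" and "norm (w (Suc m) - w m) \<le> radius_JJ phi L JJ D"
      using update(1,2) .
    show "\<delta> + r_diff phi L JJ D u - eps m \<le> u \<bullet> (w (Suc m) - w m)"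
      using update(3)[of u] r_diff_le[OF m, of u] by (simp add: eps_def)
  qed (use assms(2,3) r_diff_nonneg[of u] radius_JJ_nonneg in auto)
  then show ?thesis
    by (simp add: num_mistakes_def D_u_delta_def eps_def)
qed

end

lemma mistake_bound_le_perceptron_bound:
  fixes R RJ Dd \<delta> rd :: real
  assumes "0 \<le> RJ" "RJ \<le> R" "0 \<le> Dd" "0 < \<delta>" "0 \<le> rd"
  shows "(RJ + Dd)\<^sup>2 / (\<delta> + rd)\<^sup>2 \<le> (R + Dd)\<^sup>2 / \<delta>\<^sup>2"
  using assms by (intro frac_le power_mono) auto

theorem theorem2:
  fixes phi :: "'x \<Rightarrow> 'v::finite list \<Rightarrow> real^'d"
    and L :: "'x \<Rightarrow> nat" and JJ :: "'x \<Rightarrow> nat set set"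
    and D :: "('x \<times> 'v list) list"
    and w :: "nat \<Rightarrow> real^'d" and ystar :: "nat \<Rightarrow> 'v list" and g :: "nat \<Rightarrow> nat set \<Rightarrow> real"
  assumes D_ne: "D \<noteq> []"
    and labels: "\<forall>i<length D. snd (D ! i) \<in> outputs L (fst (D ! i))"
    and JJ_sub: "\<forall>i<length D. JJ (fst (D ! i)) \<subseteq> Pow {1..L (fst (D ! i))}"
    and JJ_nontriv: "\<forall>i<length D. \<exists>z J. z \<in> outputs L (fst (D ! i)) \<and> J \<in> JJ (fst (D ! i))
                        \<and> mixed J z (snd (D ! i)) \<noteq> snd (D ! i)"
    and run: "swvp_first_pass phi L JJ D w ystar g"
  shows "\<forall>u \<delta>. norm u = 1 \<and> \<delta> > 0 \<longrightarrow>
           r_diff phi L JJ D u \<ge> 0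
         \<and> real (num_mistakes D ystar)
             \<le> (radius_JJ phi L JJ D + D_u_delta phi L D u \<delta>)\<^sup>2 / (\<delta> + r_diff phi L JJ D u)\<^sup>2
         \<and> (radius_JJ phi L JJ D + D_u_delta phi L D u \<delta>)\<^sup>2 / (\<delta> + r_diff phi L JJ D u)\<^sup>2
             \<le> (radius phi L D + D_u_delta phi L D u \<delta>)\<^sup>2 / \<delta>\<^sup>2"
proof -
  interpret swvp_training_set phi L JJ D
  proof
    show "finite (JJ (fst (D ! i)))" if "i < length D" for i
      using JJ_sub that by (meson finite_Pow_iff finite_atLeastAtMost finite_subset)
  qed (use D_ne labels JJ_nontriv in auto)
  have "0 \<le> D_u_delta phi L D u \<delta>" for u \<delta>
    by (simp add: D_u_delta_def sum_nonneg)
  then show ?thesis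
    using r_diff_nonneg first_pass_mistake_bound[OF run] radius_JJ_nonneg radius_JJ_le_radius
      mistake_bound_le_perceptron_bound by blast
qed

end
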